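(* For an integer $n>1$ define, for every integer $1\le r\le n-1$, $$E^{C}_{n}(r)=\frac{r}{n}\sum_{k=r+1}^{n}\frac{1-\frac{k}{n}}{k-1},$$ and let $\mathcal{M}(n)$ be a value of $r$ at which $E^C_n$ attains its maximum. Let $\rho=-\frac12 W(-2e^{-2})=0.20318\dots$. Then (i) $\lim_{n\to\infty}\mathcal{M}(n)/n=\rho$; (ii) $\lim_{n\to\infty}E^C_n(\mathcal{M}(n))=\lim_{n\to\infty}E^C_n(\lfloor\rho n\rfloor)=\rho(1-\rho)=0.16190\dots$.
   Context: $W$ denotes the principal (main) branch of the Lambert $W$ function, i.e. the inverse of $z\mapsto ze^z$ on $[-1,\infty)$, so that $z=W(ze^z)$ for $z\ge -1$. *)

theory Defs
  imports Complex_Main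
begin

definition lambertW :: "real \<Rightarrow> real" where
  "lambertW x = (THE w. w \<ge> -1 \<and> w * exp w = x)"

definition EC :: "nat \<Rightarrow> nat \<Rightarrow> real" where
  "EC n r = (real r / real n) * (\<Sum>k=r+1..n. (1 - real k / real n) / (real k - 1))"

definition rho :: real where
  "rho = - (1/2) * lambertW (-2 * exp (-2))"

end

theory Submission
  imports Defs
begin

text \<open>With \<open>x = r/n\<close>, the sum \<open>\<Sum>1/(k-1)\<close> over \<open>r < k \<le> n\<close> equals \<open>ln (1/x)\<close> up to \<open>1/r\<close>,
so \<open>EC n r = g x + O(1/n)\<close> uniformly in \<open>r\<close>, where \<open>g x = x (x - 1 - ln x)\<close> (\<open>EC_limit\<close> below). Since
\<open>g' x = 2x - 2 - ln x\<close> and \<open>\<rho>\<close> is the root of \<open>ln \<rho> = 2\<rho> - 2\<close> in \<open>(0, 1/2)\<close> (equivalently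
\<open>(-2\<rho>) exp (-2\<rho>) = -2 exp (-2)\<close>, which is the Lambert W definition), \<open>g\<close> increases on \<open>(0, \<rho>]\<close>
and decreases on \<open>[\<rho>, 1]\<close>. The optimal values \<open>EC n (M n)\<close> are squeezed between
\<open>EC n \<lfloor>\<rho> n\<rfloor> \<rightarrow> g \<rho>\<close> and \<open>g \<rho> + O(1/n)\<close>; hence \<open>g (M n / n) \<rightarrow> g \<rho>\<close>, and unimodality of \<open>g\<close>
forces \<open>M n / n \<rightarrow> \<rho>\<close>. Finally \<open>g \<rho> = \<rho> (1 - \<rho>)\<close>.\<close>

lemma mult_exp_strict_mono_on: "strict_mono_on {-1..} (\<lambda>w::real. w * exp w)"
proof (rule strict_mono_onI)
  fix a b :: real
  assume "a \<in> {-1..}" "a < b"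
  show "a * exp a < b * exp b"
  proof (rule DERIV_pos_imp_increasing_open[OF \<open>a < b\<close>])
    fix x assume "a < x" "x < b"
    then have "0 < (1 + x) * exp x" using \<open>a \<in> {-1..}\<close> by simp
    then show "\<exists>y. ((\<lambda>w. w * exp w) has_real_derivative y) (at x) \<and> 0 < y"
      by (intro exI[of _ "(1 + x) * exp x"]) (auto intro!: derivative_eq_intros simp: algebra_simps)
  next
    show "continuous_on {a..b} (\<lambda>w. w * exp w)" by (intro continuous_intros)
  qed
qed

lemma lambertW_mult_exp: "-1 \<le> w \<Longrightarrow> lambertW (w * exp w) = w"
  unfolding lambertW_def
  by (rule the_equality)
     (auto dest: strict_mono_on_eqD[OF mult_exp_strict_mono_on])

lemma rho_bounds_and_equation: "0 < rho \<and> rho < 1/2 \<and> ln rho = 2 * rho - 2"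
proof -
  define y where "y = -2 * exp (-2::real)"
  have "exp (1::real) > 2" using exp_1_gt_powr[of 1] by simp
  moreover have "exp (-1::real) = exp 1 * exp (-2)" by (simp flip: exp_add)
  ultimately have below: "-1 * exp (-1) < y"
    unfolding y_def by (simp add: mult_strict_right_mono)
  obtain w where w: "-1 \<le> w" "w \<le> 0" "w * exp w = y"
    using IVT[of "\<lambda>w. w * exp w" "-1" y 0] below by (force intro!: continuous_intros simp: y_def)
  have "w \<noteq> -1" "w \<noteq> 0" using w below by (auto simp: y_def)
  moreover have rho_w: "rho = - w / 2"
    using lambertW_mult_exp[OF w(1)] w(3) unfolding rho_def y_def by simp
  ultimately have pos: "0 < rho" "rho < 1/2" using w by auto
  have "rho * exp (-2 * rho) = exp (-2)"
    using w(3) unfolding y_def \<open>rho = - w / 2\<close> by simp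
  have "rho = rho * exp (-2 * rho) * exp (2 * rho)" by (simp add: mult.assoc flip: exp_add)
  also have "\<dots> = exp (-2) * exp (2 * rho)" using \<open>rho * exp (-2 * rho) = exp (-2)\<close> by simp
  also have "\<dots> = exp (2 * rho - 2)" by (simp flip: exp_add)
  finally show ?thesis using pos by (metis ln_exp)
qed

definition EC_limit :: "real \<Rightarrow> real" where
  "EC_limit x = x * (x - 1 - ln x)"

lemma EC_limit_rho: "EC_limit rho = rho * (1 - rho)"
  using rho_bounds_and_equation by (simp add: EC_limit_def)

lemma isCont_EC_limit: "0 < x \<Longrightarrow> isCont EC_limit x"
  unfolding EC_limit_def by (intro continuous_intros) auto

lemma EC_limit_MVT:
  assumes "0 < a" "a < b"
  obtains t where "a < t" "t < b" "EC_limit b - EC_limit a = (b - a) * (2 * t - 2 - ln t)"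
proof -
  have "(EC_limit has_real_derivative (2 * x - 2 - ln x)) (at x)" if "0 < x" for x
    unfolding EC_limit_def using that by (auto intro!: derivative_eq_intros simp: field_simps)
  then show ?thesis
    using MVT2[of a b EC_limit "\<lambda>x. 2 * x - 2 - ln x"] assms that by force
qed

lemma ln_less_below_rho:
  assumes "0 < z" "z < rho"
  shows "ln z < 2 * z - 2"
proof -
  have r: "0 < rho" "rho < 1/2" "ln rho = 2 * rho - 2" using rho_bounds_and_equation by auto
  have "ln z = ln rho + ln (z / rho)" using assms r by (simp add: ln_div)
  also have "ln (z / rho) \<le> z / rho - 1" using assms r by (intro ln_le_minus_one) simp
  also have "z / rho - 1 < 2 * (z - rho)"
  proof -
    have "(z - rho) * (1 - 2 * rho) < 0" using assms r by (intro mult_neg_pos) auto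
    then show ?thesis using r by (simp add: field_simps)
  qed
  finally show ?thesis using r by simp
qed

lemma ln_greater_above_rho:
  assumes "rho < z" "z < 1"
  shows "2 * z - 2 < ln z"
proof -
  have r: "0 < rho" "ln rho = 2 * rho - 2" using rho_bounds_and_equation by auto
  define h where "h x = ln x - 2 * x + 2" for x :: real
  have "(h has_real_derivative (1 / x - 2)) (at x)" if "0 < x" for x
    unfolding h_def using that by (auto intro!: derivative_eq_intros)
  note MVT = MVT2[of _ _ h "\<lambda>x. 1 / x - 2"]
  show ?thesis
  proof (cases "z < 1/2")
    case True
    obtain t where t: "rho < t" "t < z" "h z - h rho = (z - rho) * (1 / t - 2)"
      using MVT[of rho z] \<open>0 < rho\<close> assms \<open>\<And>x. 0 < x \<Longrightarrow> _\<close> by force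
    have "0 < 1 / t - 2" using t True r by (simp add: field_simps)
    then have "0 < (z - rho) * (1 / t - 2)" using assms by simp
    then show ?thesis using t r by (simp add: h_def)
  next
    case False
    obtain t where t: "z < t" "t < 1" "h 1 - h z = (1 - z) * (1 / t - 2)"
      using MVT[of z 1] assms r \<open>\<And>x. 0 < x \<Longrightarrow> _\<close> by force
    have "1 / t - 2 < 0" using t False by (simp add: field_simps)
    then have "(1 - z) * (1 / t - 2) < 0" using assms by (simp add: mult_pos_neg)
    then show ?thesis using t by (simp add: h_def)
  qed
qed

lemma EC_limit_strict_mono_on: "strict_mono_on {0<..rho} EC_limit"
proof (rule strict_mono_onI)
  fix a b assume ab: "a \<in> {0<..rho}" "b \<in> {0<..rho}" "a < b"
  obtain t where t: "a < t" "t < b" "EC_limit b - EC_limit a = (b - a) * (2 * t - 2 - ln t)"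
    using EC_limit_MVT[of a b] ab by auto
  have "ln t < 2 * t - 2" using t ab by (intro ln_less_below_rho) auto
  then have "0 < (b - a) * (2 * t - 2 - ln t)" using ab by simp
  then show "EC_limit a < EC_limit b" using t by simp
qed

lemma EC_limit_strict_antimono_on: "strict_antimono_on {rho..1} EC_limit"
proof (rule monotone_onI)
  have "0 < rho" using rho_bounds_and_equation by simp
  fix a b assume ab: "a \<in> {rho..1}" "b \<in> {rho..1}" "a < b"
  obtain t where t: "a < t" "t < b" "EC_limit b - EC_limit a = (b - a) * (2 * t - 2 - ln t)"
    using EC_limit_MVT[of a b] \<open>0 < rho\<close> ab by auto
  have "2 * t - 2 < ln t" using t ab by (intro ln_greater_above_rho) auto
  then have "(b - a) * (2 * t - 2 - ln t) < 0" using ab by (simp add: mult_pos_neg)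
  then show "EC_limit b < EC_limit a" using t by simp
qed

lemma EC_limit_le_rho: "0 < x \<Longrightarrow> x \<le> 1 \<Longrightarrow> EC_limit x \<le> EC_limit rho"
  using strict_mono_on_leD[OF EC_limit_strict_mono_on, of x rho]
    monotone_onD[OF EC_limit_strict_antimono_on, of rho x]
  by (cases "x \<le> rho") auto

lemma tendsto_maximizer:
  fixes g :: "real \<Rightarrow> real" and x :: "'a \<Rightarrow> real"
  assumes inc: "strict_mono_on {a<..c} g" and dec: "strict_antimono_on {c..b} g"
    and "a < c" "c < b"
    and range: "eventually (\<lambda>n. x n \<in> {a<..b}) F"
    and max: "((\<lambda>n. g (x n)) \<longlongrightarrow> g c) F"
  shows "(x \<longlongrightarrow> c) F"
proof (rule tendstoI)
  fix e :: real assume "0 < e"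
  define e' where "e' = min e (min ((c - a) / 2) (b - c))"
  have "0 < e'" "e' \<le> e" "e' \<le> (c - a) / 2" "e' \<le> b - c"
    using \<open>0 < e\<close> \<open>a < c\<close> \<open>c < b\<close> unfolding e'_def by (simp_all add: min_def)
  then have e': "0 < e'" "e' \<le> e" "a < c - e'" "c + e' \<le> b" using \<open>a < c\<close> by (auto simp: field_simps)
  have "g (c - e') < g c" using e' by (intro strict_mono_onD[OF inc]) auto
  moreover have "g (c + e') < g c" using e' by (intro monotone_onD[OF dec]) auto
  ultimately have "0 < min (g c - g (c - e')) (g c - g (c + e'))" by simp
  from tendstoD[OF max this] range
  show "eventually (\<lambda>n. dist (x n) c < e) F"
  proof eventually_elim
    case (elim n)
    have "\<not> x n \<le> c - e'"
    proof
      assume "x n \<le> c - e'"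
      then have "g (x n) \<le> g (c - e')"
        using elim(2) e' by (intro strict_mono_on_leD[OF inc]) auto
      with elim(1) show False by (simp add: dist_real_def abs_less_iff)
    qed
    moreover have "\<not> c + e' \<le> x n"
    proof
      assume "c + e' \<le> x n"
      then have "g (x n) \<le> g (c + e')"
        using elim(2) e' monotone_onD[OF dec, of "c + e'" "x n"] by (cases "x n = c + e'") auto
      with elim(1) show False by (simp add: dist_real_def abs_less_iff)
    qed
    ultimately show ?case using e' by (simp add: dist_real_def abs_less_iff)
  qed
qed

lemma ln_one_plus_inverse_bounds:
  fixes x :: real
  assumes "0 < x"
  shows "1 / (1 + x) \<le> ln (1 + 1 / x) \<and> ln (1 + 1 / x) \<le> 1 / x"
proof
  have "ln (x / (x + 1)) \<le> x / (x + 1) - 1" using ln_le_minus_one[of "x / (x + 1)"] assms by simp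
  moreover have "ln (x / (x + 1)) = - ln (1 + 1 / x)" using assms by (simp add: ln_div field_simps)
  ultimately show "1 / (1 + x) \<le> ln (1 + 1 / x)" using assms by (simp add: field_simps)
  show "ln (1 + 1 / x) \<le> 1 / x" using assms by (intro ln_add_one_self_le_self) simp
qed

lemma sum_inverse_pred_ln_bounds:
  assumes "1 \<le> r" "r \<le> n"
  shows "ln (real n / real r) \<le> (\<Sum>k=r+1..n. 1 / (real k - 1)) \<and>
         (\<Sum>k=r+1..n. 1 / (real k - 1)) \<le> ln (real n / real r) + 1 / real r - 1 / real n"
  using assms(2)
proof (induction n rule: dec_induct)
  case (step m)
  have "1 \<le> m" using step assms by simp
  have sum: "(\<Sum>k=r+1..Suc m. 1 / (real k - 1)) = (\<Sum>k=r+1..m. 1 / (real k - 1)) + 1 / real m"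
    using step by (simp add: sum.cl_ivl_Suc)
  have split: "real (Suc m) / real r = real m / real r * (1 + 1 / real m)"
    using \<open>1 \<le> m\<close> assms by (simp add: field_simps)
  have ln: "ln (real (Suc m) / real r) = ln (real m / real r) + ln (1 + 1 / real m)"
    unfolding split using ln_mult[of "real m / real r" "1 + 1 / real m"] \<open>1 \<le> m\<close> assms
    by (simp add: add_pos_nonneg[THEN less_imp_neq, symmetric])
  have "1 / real (Suc m) \<le> ln (1 + 1 / real m) \<and> ln (1 + 1 / real m) \<le> 1 / real m"
    using ln_one_plus_inverse_bounds[of "real m"] \<open>1 \<le> m\<close> by simp
  then show ?case
    using step.IH unfolding sum ln by (auto simp: add.commute)
qed simp

lemma EC_eq_sum_inverse_pred:
  assumes "1 \<le> r" "r \<le> n"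
  shows "EC n r = (real r / real n) * ((real n - 1)/real n * (\<Sum>k=r+1..n. 1/(real k - 1))
                    - (real n - real r)/real n)"
proof -
  have n: "0 < real n" using assms by simp
  have "(\<Sum>k=r+1..n. (1 - real k / real n) / (real k - 1)) =
        (\<Sum>k=r+1..n. (real n - 1)/real n * (1/(real k - 1)) - 1/real n)"
  proof (rule sum.cong)
    fix k assume "k \<in> {r+1..n}"
    then have "real k - 1 \<noteq> 0" using assms by auto
    then show "(1 - real k / real n) / (real k - 1) = (real n - 1)/real n * (1/(real k - 1)) - 1/real n"
      using n by (simp add: field_simps)
  qed simp
  also have "\<dots> = (real n - 1)/real n * (\<Sum>k=r+1..n. 1/(real k - 1)) - (real n - real r)/real n"
    using assms by (simp add: sum_subtractf sum_distrib_left of_nat_diff)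
  finally show ?thesis unfolding EC_def by simp
qed

lemma EC_approx_EC_limit:
  assumes "1 \<le> r" "r \<le> n"
  shows "\<bar>EC n r - EC_limit (real r / real n)\<bar> \<le> 2 / real n"
proof -
  define D where "D = (\<Sum>k=r+1..n. 1 / (real k - 1))"
  define L where "L = ln (real n / real r)"
  define x where "x = real r / real n"
  have n: "1 \<le> real r" "real r \<le> real n" using assms by auto
  have x: "0 < x" "x \<le> 1" using n by (auto simp: x_def)
  have DL: "L \<le> D" "D \<le> L + 1 / real r"
    using sum_inverse_pred_ln_bounds[OF assms] by (auto simp: D_def L_def intro: order_trans)
  have L: "L = - ln x" using n by (simp add: L_def x_def ln_div)
  have x_over_r: "x * (1 / real r) = 1 / real n" using n by (simp add: x_def)
  have "EC n r = x * ((real n - 1) / real n * D - (1 - x))"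
    using EC_eq_sum_inverse_pred[OF assms] n by (simp add: D_def x_def diff_divide_distrib)
  then have diff: "EC n r - EC_limit x = x * (D - L) - x * D / real n"
    using n by (simp add: EC_limit_def L field_simps)
  have "x * (D - L) \<le> x * (1 / real r)" using x DL by (intro mult_left_mono) auto
  then have first: "0 \<le> x * (D - L)" "x * (D - L) \<le> 1 / real n"
    using x DL x_over_r by simp_all
  have "- ln x \<le> 1 / x - 1" using ln_le_minus_one[of "1 / x"] x by (simp add: ln_div)
  then have "x * L \<le> 1 - x" using x unfolding L by (simp add: field_simps)
  moreover have "x * D \<le> x * L + 1 / real n"
    using mult_left_mono[OF DL(2), of x] x x_over_r by (simp add: algebra_simps)
  moreover have "1 / real n \<le> 1" using n by simp
  ultimately have "x * D / real n \<le> 2 / real n" using x by (simp add: divide_right_mono)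
  moreover have "0 \<le> L" using n by (simp add: L_def)
  then have "0 \<le> x * D / real n" using x DL by simp
  ultimately show ?thesis using diff first by (simp add: x_def abs_le_iff)
qed

lemma EC_le_EC_limit_rho: "1 \<le> r \<Longrightarrow> r \<le> n \<Longrightarrow> EC n r \<le> EC_limit rho + 2 / real n"
  using EC_approx_EC_limit[of r n] EC_limit_le_rho[of "real r / real n"] by (simp add: abs_le_iff)

lemma tendsto_eventually_close:
  fixes u v e :: "'a \<Rightarrow> real"
  assumes "(u \<longlongrightarrow> c) F" "(e \<longlongrightarrow> 0) F" "eventually (\<lambda>x. \<bar>v x - u x\<bar> \<le> e x) F"
  shows "(v \<longlongrightarrow> c) F"
proof (rule tendsto_sandwich)
  show "eventually (\<lambda>x. u x - e x \<le> v x) F" "eventually (\<lambda>x. v x \<le> u x + e x) F"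
    using assms(3) by (auto elim: eventually_mono simp: abs_le_iff)
  show "((\<lambda>x. u x - e x) \<longlongrightarrow> c) F" "((\<lambda>x. u x + e x) \<longlongrightarrow> c) F"
    using tendsto_diff[OF assms(1,2)] tendsto_add[OF assms(1,2)] by simp_all
qed

lemma EC_tendsto_iff_EC_limit_tendsto:
  assumes "eventually (\<lambda>n. 1 \<le> r n \<and> r n \<le> n) sequentially"
  shows "(\<lambda>n. EC n (r n)) \<longlonglongrightarrow> c \<longleftrightarrow> (\<lambda>n. EC_limit (real (r n) / real n)) \<longlonglongrightarrow> c"
proof -
  have close: "eventually (\<lambda>n. \<bar>EC n (r n) - EC_limit (real (r n) / real n)\<bar> \<le> 2 / real n) sequentially"
    using assms by eventually_elim (auto intro: EC_approx_EC_limit)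
  then have close': "eventually (\<lambda>n. \<bar>EC_limit (real (r n) / real n) - EC n (r n)\<bar> \<le> 2 / real n) sequentially"
    by (simp add: abs_minus_commute)
  show ?thesis
    using tendsto_eventually_close[OF _ lim_const_over_n close]
      tendsto_eventually_close[OF _ lim_const_over_n close'] by blast
qed

lemma nat_floor_mult_over_n_tendsto:
  assumes "0 \<le> c"
  shows "(\<lambda>n. real (nat \<lfloor>c * real n\<rfloor>) / real n) \<longlonglongrightarrow> c"
proof (rule tendsto_eventually_close)
  show "(\<lambda>n. 1 / real n) \<longlonglongrightarrow> 0" by (rule lim_const_over_n)
  have "\<bar>real (nat \<lfloor>c * real n\<rfloor>) / real n - c\<bar> \<le> 1 / real n" if "1 \<le> n" for n
  proof -
    have "\<bar>real (nat \<lfloor>c * real n\<rfloor>) - c * real n\<bar> \<le> 1"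
      using assms floor_correct[of "c * real n"] by (simp add: abs_le_iff) linarith
    then show ?thesis using that by (simp add: field_simps abs_divide[symmetric])
  qed
  then show "eventually (\<lambda>n. \<bar>real (nat \<lfloor>c * real n\<rfloor>) / real n - c\<bar> \<le> 1 / real n) sequentially"
    by (auto intro: eventually_sequentiallyI)
qed simp

lemma eventually_nat_floor_mult_between:
  assumes "0 < c" "c < 1"
  shows "eventually (\<lambda>n. 1 \<le> nat \<lfloor>c * real n\<rfloor> \<and> nat \<lfloor>c * real n\<rfloor> \<le> n - 1) sequentially"
proof -
  obtain N :: nat where N: "max (1 / c) (1 / (1 - c)) < real N" using reals_Archimedean2 by blast
  have "1 \<le> nat \<lfloor>c * real n\<rfloor> \<and> nat \<lfloor>c * real n\<rfloor> \<le> n - 1" if "N \<le> n" for n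
  proof -
    have "1 / c < real n" "1 / (1 - c) < real n" using N that by linarith+
    then have "1 \<le> c * real n" "c * real n \<le> real n - 1" using assms by (simp_all add: field_simps)
    then show ?thesis by linarith
  qed
  then show ?thesis by (auto intro: eventually_sequentiallyI)
qed

theorem proposition3:
  fixes M :: "nat \<Rightarrow> nat"
  assumes "\<And>n. n > 1 \<Longrightarrow> 1 \<le> M n \<and> M n \<le> n - 1 \<and>
                 (\<forall>r\<in>{1..n-1}. EC n r \<le> EC n (M n))"
  shows "((\<lambda>n. real (M n) / real n) \<longlonglongrightarrow> rho) \<and>
         ((\<lambda>n. EC n (M n)) \<longlonglongrightarrow> rho * (1 - rho)) \<and>
         ((\<lambda>n. EC n (nat \<lfloor>rho * real n\<rfloor>)) \<longlonglongrightarrow> rho * (1 - rho))"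
proof -
  have rho: "0 < rho" "rho < 1" using rho_bounds_and_equation by auto
  define r0 where "r0 n = nat \<lfloor>rho * real n\<rfloor>" for n
  have r0_range: "eventually (\<lambda>n. 1 \<le> r0 n \<and> r0 n \<le> n - 1) sequentially"
    unfolding r0_def using eventually_nat_floor_mult_between[OF rho] .
  have M_range: "eventually (\<lambda>n. 1 \<le> M n \<and> M n \<le> n \<and> EC n (r0 n) \<le> EC n (M n)) sequentially"
    using r0_range eventually_gt_at_top[of 1]
  proof eventually_elim
    case (elim n)
    then show ?case using assms[of n] by auto
  qed
  have "(\<lambda>n. EC_limit (real (r0 n) / real n)) \<longlonglongrightarrow> EC_limit rho"
    unfolding r0_def using isCont_tendsto_compose[OF isCont_EC_limit nat_floor_mult_over_n_tendsto] rho by simp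
  then have EC_r0: "(\<lambda>n. EC n (r0 n)) \<longlonglongrightarrow> EC_limit rho"
    using r0_range by (subst EC_tendsto_iff_EC_limit_tendsto) (auto elim: eventually_mono)
  have EC_M: "(\<lambda>n. EC n (M n)) \<longlonglongrightarrow> EC_limit rho"
  proof (rule tendsto_sandwich[OF _ _ EC_r0])
    show "eventually (\<lambda>n. EC n (r0 n) \<le> EC n (M n)) sequentially"
      "eventually (\<lambda>n. EC n (M n) \<le> EC_limit rho + 2 / real n) sequentially"
      using M_range by (auto elim!: eventually_mono intro: EC_le_EC_limit_rho)
    show "(\<lambda>n. EC_limit rho + 2 / real n) \<longlonglongrightarrow> EC_limit rho"
      using tendsto_add[OF tendsto_const lim_const_over_n] by simp
  qed
  then have "(\<lambda>n. EC_limit (real (M n) / real n)) \<longlonglongrightarrow> EC_limit rho"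
    using M_range by (subst (asm) EC_tendsto_iff_EC_limit_tendsto) (auto elim: eventually_mono)
  then have "(\<lambda>n. real (M n) / real n) \<longlonglongrightarrow> rho"
    using M_range rho
    by (intro tendsto_maximizer[OF EC_limit_strict_mono_on EC_limit_strict_antimono_on])
       (auto elim!: eventually_mono)
  with EC_M EC_r0 show ?thesis by (simp add: r0_def EC_limit_rho)
qed

end
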